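(* Let $K$ be an algebraically closed field of characteristic $0$, let $1\le t\le m\le n$, and let $V,W$ be $K$-vector spaces of dimensions $m,n$. Then there exist elements $x\in X_t(V,W)$ with each of the following combinations of small rank and rank: $\operatorname{sr}(x)=\operatorname{rank}x=0$; $\operatorname{sr}(x)=\operatorname{rank}x=1$; $\operatorname{sr}(x)=u$ and $\operatorname{rank}x=\binom{u+k-1}{u-1}$ for every $u\in\{2,\dots,t+1\}$ and every $k\in\{1,\dots,m-t\}$.
   Context: For $t\ge0$ let $\Lambda_t:\operatorname{Hom}_K(V,W)\to\operatorname{Hom}_K(\bigwedge^tV,\bigwedge^tW)$, $\Lambda_t(\phi)=\bigwedge^t\phi$. $X_t(V,W)$ is the Zariski closure of the image of $\Lambda_t$ in the affine space $\operatorname{Hom}_K(\bigwedge^tV,\bigwedge^tW)$. For $\psi\in\operatorname{Hom}_K(\bigwedge^tV,\bigwedge^tW)$, $\operatorname{rank}\psi$ is its rank as a linear map, and the small rank $\operatorname{sr}(\psi)$ is the maximum of the ranks of the restrictions of $\psi$ to the subspaces $\bigwedge^tU\subseteq\bigwedge^tV$, where $U$ ranges over all subspaces of $V$ of dimension $\le t+1$. *)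

theory Defs
  imports "HOL-Computational_Algebra.Polynomial" "HOL-Library.Function_Algebras"
    "Jordan_Normal_Form.Determinant"
begin

definition fscale :: "'a::field \<Rightarrow> ('b \<Rightarrow> 'a) \<Rightarrow> ('b \<Rightarrow> 'a)" where
  "fscale c f = (\<lambda>x. c * f x)"

interpretation fvs: vector_space "fscale :: 'a::field \<Rightarrow> ('b \<Rightarrow> 'a) \<Rightarrow> _"
  by unfold_locales (auto simp: fscale_def fun_eq_iff algebra_simps)

text \<open>V = K^m is represented as the functions nat => K vanishing outside {0..<m}.
  The t-subsets of {0..<d} index the standard basis of the t-th exterior power of K^d.\<close>

definition Kspace :: "nat \<Rightarrow> (nat \<Rightarrow> 'a::field) set" where
  "Kspace d = {v. \<forall>j\<ge>d. v j = 0}"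

definition tsubs :: "nat \<Rightarrow> nat \<Rightarrow> nat set set" where
  "tsubs d t = {S. S \<subseteq> {0..<d} \<and> card S = t}"

definition minor :: "nat \<Rightarrow> (nat \<Rightarrow> nat \<Rightarrow> 'a::comm_ring_1) \<Rightarrow> nat set \<Rightarrow> nat set \<Rightarrow> 'a" where
  "minor t A I J = det (mat t t (\<lambda>(a, b). A (sorted_list_of_set I ! a) (sorted_list_of_set J ! b)))"

text \<open>The affine space Hom(wedge^t V, wedge^t W), with V = K^m, W = K^n, in standard coordinates:
  psi (I, J) is the coefficient of e_I in psi(e_J).\<close>
definition HomSpace :: "nat \<Rightarrow> nat \<Rightarrow> nat \<Rightarrow> (nat set \<times> nat set \<Rightarrow> 'a::field) set" where
  "HomSpace t m n = {\<psi>. \<forall>I J. (I \<notin> tsubs n t \<or> J \<notin> tsubs m t) \<longrightarrow> \<psi> (I, J) = 0}"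

text \<open>Lambda_t(phi) = wedge^t phi, where phi : K^m -> K^n is given by its n x m matrix A.\<close>
definition Lambda :: "nat \<Rightarrow> nat \<Rightarrow> nat \<Rightarrow> (nat \<Rightarrow> nat \<Rightarrow> 'a::field) \<Rightarrow> (nat set \<times> nat set \<Rightarrow> 'a)" where
  "Lambda t m n A = (\<lambda>(I, J). if I \<in> tsubs n t \<and> J \<in> tsubs m t then minor t A I J else 0)"

inductive_set polyfun :: "(('i \<Rightarrow> 'a::comm_ring_1) \<Rightarrow> 'a) set" where
  const: "(\<lambda>x. c) \<in> polyfun"
| coord: "(\<lambda>x. x i) \<in> polyfun"
| add: "p \<in> polyfun \<Longrightarrow> q \<in> polyfun \<Longrightarrow> (\<lambda>x. p x + q x) \<in> polyfun"
| mult: "p \<in> polyfun \<Longrightarrow> q \<in> polyfun \<Longrightarrow> (\<lambda>x. p x * q x) \<in> polyfun"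

definition zariski_closure :: "('i \<Rightarrow> 'a::comm_ring_1) set \<Rightarrow> ('i \<Rightarrow> 'a) set \<Rightarrow> ('i \<Rightarrow> 'a) set" where
  "zariski_closure A S = {x \<in> A. \<forall>p\<in>polyfun. (\<forall>s\<in>S. p s = 0) \<longrightarrow> p x = 0}"

definition Xt :: "nat \<Rightarrow> nat \<Rightarrow> nat \<Rightarrow> (nat set \<times> nat set \<Rightarrow> 'a::field) set" where
  "Xt t m n = zariski_closure (HomSpace t m n) (range (Lambda t m n))"

definition lin :: "nat \<Rightarrow> nat \<Rightarrow> (nat set \<times> nat set \<Rightarrow> 'a::field) \<Rightarrow> (nat set \<Rightarrow> 'a) \<Rightarrow> (nat set \<Rightarrow> 'a)" where
  "lin t m \<psi> v = (\<lambda>I. \<Sum>J\<in>tsubs m t. \<psi> (I, J) * v J)"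

definition rank_hom :: "nat \<Rightarrow> nat \<Rightarrow> (nat set \<times> nat set \<Rightarrow> 'a::field) \<Rightarrow> nat" where
  "rank_hom t m \<psi> = fvs.dim (range (lin t m \<psi>))"

text \<open>Coordinates of u_0 wedge ... wedge u_(t-1) in wedge^t K^m.\<close>
definition wedge :: "nat \<Rightarrow> nat \<Rightarrow> (nat \<Rightarrow> nat \<Rightarrow> 'a::field) \<Rightarrow> (nat set \<Rightarrow> 'a)" where
  "wedge t m u = (\<lambda>J. if J \<in> tsubs m t then det (mat t t (\<lambda>(a, b). u b (sorted_list_of_set J ! a))) else 0)"

definition ext_pow :: "nat \<Rightarrow> nat \<Rightarrow> (nat \<Rightarrow> 'a::field) set \<Rightarrow> (nat set \<Rightarrow> 'a) set" where
  "ext_pow t m U = fvs.span {wedge t m u | u. \<forall>b<t. u b \<in> U}"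

definition small_rank :: "nat \<Rightarrow> nat \<Rightarrow> (nat set \<times> nat set \<Rightarrow> 'a::field) \<Rightarrow> nat" where
  "small_rank t m \<psi> = Max {fvs.dim (lin t m \<psi> ` ext_pow t m U) | U.
      fvs.subspace U \<and> U \<subseteq> Kspace m \<and> fvs.dim U \<le> t + 1}"

end

theory Submission
  imports Defs
begin

text \<open>The witnesses are the coordinate projections x_D of wedge^t K^m onto the span of the e_J with
  {0..<r} \<subseteq> J \<subseteq> {0..<r+l}. Such an x_D is the limit, as s \<rightarrow> 0, of the t-th exterior powers of
  the diagonal maps diag(\<mu>, ..., \<mu>, \<mu>s, ..., \<mu>s, 0, ...) with \<mu>^t = s^(r-t); along this curve a
  polynomial vanishing on the image of Lambda_t is a polynomial in s with infinitely many roots, so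
  x_D lies in X_t. Its rank is |D| = binom(l, t-r). If dim U \<le> t+1, some basis of U has all but at
  most r vectors vanishing on the first r coordinates; a wedge of basis vectors survives x_D only if
  it contains all the other ones, so at most t+1-r of them survive. The span of e_0, ..., e_t attains
  this bound once r + l \<ge> t + 1.\<close>

section \<open>Determinants\<close>

lemma det_eq_0_if_rows_supported_on_fewer_columns:
  fixes f :: "nat \<times> nat \<Rightarrow> 'a::comm_ring_1"
  assumes R: "R \<subseteq> {0..<t}" and C: "finite C" "card C < card R"
    and zero: "\<And>a c. a \<in> R \<Longrightarrow> c < t \<Longrightarrow> c \<notin> C \<Longrightarrow> f (a, c) = 0"
  shows "det (mat t t f) = 0"
proof -
  have "(\<Prod>a = 0..<t. mat t t f $$ (a, p a)) = 0" if p: "p permutes {0..<t}" for p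
  proof (cases "p ` R \<subseteq> C")
    case True
    moreover have "inj_on p R" using permutes_inj_on[OF p] .
    ultimately have "card R \<le> card C" using C(1) by (metis card_image card_mono)
    then show ?thesis using C by simp
  next
    case False
    then obtain a where a: "a \<in> R" "p a \<notin> C" by auto
    with R p have "a < t" "p a < t" by (auto simp: permutes_in_image)
    with zero a show ?thesis by (intro prod_zero bexI[of _ a]) auto
  qed
  then show ?thesis by (subst det_def'[of _ t]) auto
qed

lemma det_eq_0_if_zero_row:
  fixes f :: "nat \<times> nat \<Rightarrow> 'a::comm_ring_1"
  assumes "a < t" "\<And>c. c < t \<Longrightarrow> f (a, c) = 0"
  shows "det (mat t t f) = 0"
  by (rule det_eq_0_if_rows_supported_on_fewer_columns[of "{a}" t "{}"]) (use assms in auto)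

lemma det_column_expansion:
  fixes g :: "nat \<Rightarrow> nat \<Rightarrow> 'a::comm_ring_1"
  assumes "j < t"
  obtains C where "\<And>z. det (mat t t (\<lambda>(a, b). if b = j then z a else g a b)) = (\<Sum>a<t. z a * C a)"
proof
  define M where "M z = mat t t (\<lambda>(a, b). if b = j then z a else g a b)" for z :: "nat \<Rightarrow> 'a"
  fix z
  have "mat_delete (M z) a j = mat_delete (M 0) a j" for a
    by (auto simp: M_def mat_delete_def intro!: eq_matI)
  then have "cofactor (M z) a j = cofactor (M 0) a j" for a
    by (simp add: cofactor_def)
  moreover have "det (M z) = (\<Sum>a<t. M z $$ (a, j) * cofactor (M z) a j)"
    by (rule laplace_expansion_column) (auto simp: M_def assms)
  ultimately show "det (M z) = (\<Sum>a<t. z a * cofactor (M 0) a j)"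
    by (simp add: M_def assms)
qed

section \<open>Wedges of vectors\<close>

lemma linear_wedge_slot:
  assumes "j < t"
  shows "Vector_Spaces.linear fscale fscale (\<lambda>v. wedge t m (u(j := v)))"
proof -
  have "\<exists>C. \<forall>z. det (mat t t (\<lambda>(a, b). (u(j := z)) b (sorted_list_of_set J ! a)))
      = (\<Sum>a<t. z (sorted_list_of_set J ! a) * C a)" for J
  proof -
    obtain C where C: "\<And>z. det (mat t t (\<lambda>(a, b). if b = j then z a else u b (sorted_list_of_set J ! a)))
        = (\<Sum>a<t. z a * C a)"
      using det_column_expansion[OF assms, where g="\<lambda>a b. u b (sorted_list_of_set J ! a)"] by blast
    have "mat t t (\<lambda>(a, b). (u(j := z)) b (sorted_list_of_set J ! a))
        = mat t t (\<lambda>(a, b). if b = j then z (sorted_list_of_set J ! a) else u b (sorted_list_of_set J ! a))"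
      for z :: "nat \<Rightarrow> 'a"
      by (auto intro!: eq_matI)
    then show ?thesis
      by (intro exI[of _ C] allI) (simp add: C)
  qed
  then obtain C where C: "\<And>J z. det (mat t t (\<lambda>(a, b). (u(j := z)) b (sorted_list_of_set J ! a)))
      = (\<Sum>a<t. z (sorted_list_of_set J ! a) * C J a)"
    by metis
  show ?thesis
    by unfold_locales
      (simp_all add: wedge_def C fun_eq_iff fscale_def sum.distrib sum_distrib_left algebra_simps
        del: fun_upd_apply)
qed

lemma wedge_mem_subspace_if_spanned:
  assumes S: "fvs.subspace S"
    and base: "\<And>u. \<forall>b<t. u b \<in> B \<Longrightarrow> wedge t m u \<in> S"
    and u: "\<forall>b<t. u b \<in> fvs.span B"
  shows "wedge t m u \<in> S"
proof -
  have "\<forall>u. (\<forall>b<t. if b < j then u b \<in> fvs.span B else u b \<in> B) \<longrightarrow> wedge t m u \<in> S"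
    if "j \<le> t" for j
    using that
  proof (induction j)
    case 0
    then show ?case using base by simp
  next
    case (Suc j)
    show ?case
    proof (intro allI impI)
      fix u assume u: "\<forall>b<t. if b < Suc j then u b \<in> fvs.span B else u b \<in> B"
      have j: "j < t" using Suc.prems by simp
      interpret slot: Vector_Spaces.linear fscale fscale "\<lambda>v. wedge t m (u(j := v))"
        using linear_wedge_slot[OF j] .
      have "B \<subseteq> (\<lambda>v. wedge t m (u(j := v))) -` S"
        using Suc u by auto
      then have "fvs.span B \<subseteq> (\<lambda>v. wedge t m (u(j := v))) -` S"
        using fvs.span_minimal slot.subspace_vimage[OF S] by blast
      moreover have "u j \<in> fvs.span B" using u j by auto
      ultimately show "wedge t m u \<in> S" by auto
    qed
  qed
  from this[of t] u show ?thesis by auto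
qed

lemma wedge_cong: "(\<And>b. b < t \<Longrightarrow> u b = v b) \<Longrightarrow> wedge t m u = wedge t m v"
  unfolding wedge_def by (intro ext if_cong refl arg_cong[where f=det]) (auto intro!: eq_matI)

lemma wedge_eq_0_if_repeated:
  assumes "b1 < t" "b2 < t" "b1 \<noteq> b2" "u b1 = u b2"
  shows "wedge t m u = 0"
proof
  fix J
  have "det (mat t t (\<lambda>(a, b). u b (sorted_list_of_set J ! a))) = 0"
    by (rule det_identical_columns[of _ t b1 b2]) (use assms in \<open>auto intro!: eq_vecI\<close>)
  then show "wedge t m u J = 0 J" unfolding wedge_def by simp
qed

lemma wedge_permute:
  assumes p: "p permutes {0..<t}"
  shows "wedge t m (u \<circ> p) = fscale (signof p) (wedge t m u)"
proof
  fix J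
  let ?A = "mat t t (\<lambda>(a, b). u b (sorted_list_of_set J ! a))"
  let ?B = "mat t t (\<lambda>(a, b). (u \<circ> p) b (sorted_list_of_set J ! a))"
  have "det ?B = det (transpose_mat ?B)" using det_transpose[of ?B t] by simp
  also have "transpose_mat ?B = mat t t (\<lambda>(i, j). (transpose_mat ?A) $$ (p i, j))"
    using p by (auto intro!: eq_matI simp: permutes_in_image)
  also have "det \<dots> = signof p * det (transpose_mat ?A)"
    by (rule det_permute_rows[OF _ p]) simp
  also have "det (transpose_mat ?A) = det ?A" using det_transpose[of ?A t] by simp
  finally show "wedge t m (u \<circ> p) J = fscale (signof p) (wedge t m u) J"
    unfolding wedge_def fscale_def by simp
qed

lemma wedge_eq_scaled_if_same_image:
  assumes u: "inj_on u {0..<t}" and w: "inj_on w {0..<t}" and im: "u ` {0..<t} = w ` {0..<t}"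
  shows "\<exists>c. wedge t m u = fscale c (wedge t m w)"
proof -
  define p where "p b = (if b < t then the_inv_into {0..<t} w (u b) else b)" for b
  have "bij_betw u {0..<t} (w ` {0..<t})" using u im by (simp add: bij_betw_def)
  moreover have "bij_betw (the_inv_into {0..<t} w) (w ` {0..<t}) {0..<t}"
    using w by (simp add: bij_betw_the_inv_into inj_on_imp_bij_betw)
  ultimately have "bij_betw (the_inv_into {0..<t} w \<circ> u) {0..<t} {0..<t}"
    by (rule bij_betw_trans)
  then have "bij_betw p {0..<t} {0..<t}"
    by (rule bij_betw_cong[THEN iffD1, rotated]) (simp add: p_def)
  then have p: "p permutes {0..<t}"
    by (rule bij_imp_permutes) (simp add: p_def)
  have "u b = (w \<circ> p) b" if "b < t" for b
  proof -
    have "u b \<in> w ` {0..<t}" using im that by auto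
    then show ?thesis using that w by (simp add: p_def f_the_inv_into_f)
  qed
  then have "wedge t m u = wedge t m (w \<circ> p)" by (rule wedge_cong)
  with wedge_permute[OF p] show ?thesis by auto
qed

section \<open>Coordinate projections and an upper bound for the small rank\<close>

definition unit_fun :: "'b \<Rightarrow> 'b \<Rightarrow> 'a::field" where
  "unit_fun i = (\<lambda>x. if x = i then 1 else 0)"

definition coord_proj :: "'b set \<Rightarrow> ('b \<Rightarrow> 'a::field) \<Rightarrow> 'b \<Rightarrow> 'a" where
  "coord_proj D f = (\<lambda>x. if x \<in> D then f x else 0)"

lemma sum_fun_apply: "(\<Sum>i\<in>A. f i) x = (\<Sum>i\<in>A. f i x)"
  by (induction A rule: infinite_finite_induct) auto

lemma inj_unit_fun: "inj (unit_fun :: 'b \<Rightarrow> 'b \<Rightarrow> 'a::field)"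
  by (rule injI) (auto simp: unit_fun_def fun_eq_iff split: if_splits)

lemma independent_unit_funs:
  assumes "finite S"
  shows "fvs.independent (unit_fun ` S :: ('b \<Rightarrow> 'a::field) set)"
proof (rule fvs.independent_if_scalars_zero)
  fix c :: "('b \<Rightarrow> 'a) \<Rightarrow> 'a" and v :: "'b \<Rightarrow> 'a"
  assume sum: "(\<Sum>w\<in>unit_fun ` S. fscale (c w) w) = 0" and "v \<in> unit_fun ` S"
  then obtain i where i: "i \<in> S" "v = unit_fun i" by auto
  have "0 = (\<Sum>w\<in>unit_fun ` S. fscale (c w) w) i" using sum by simp
  also have "\<dots> = (\<Sum>j\<in>S. c (unit_fun j) * unit_fun j i)"
    by (simp add: sum_fun_apply sum.reindex inj_on_subset[OF inj_unit_fun] fscale_def)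
  also have "\<dots> = (\<Sum>j\<in>S. if i = j then c (unit_fun j) else 0)"
    by (rule sum.cong) (auto simp: unit_fun_def)
  also have "\<dots> = c v" using i assms by simp
  finally show "c v = 0" by simp
qed (use assms in simp)

lemma mem_span_unit_funs:
  assumes "finite S" "\<And>x. x \<notin> S \<Longrightarrow> f x = 0"
  shows "f \<in> fvs.span (unit_fun ` S)"
proof -
  have "(\<Sum>i\<in>S. fscale (f i) (unit_fun i)) x = (\<Sum>i\<in>S. if x = i then f x else 0)" for x
    unfolding sum_fun_apply by (rule sum.cong) (auto simp: fscale_def unit_fun_def)
  then have "f = (\<Sum>i\<in>S. fscale (f i) (unit_fun i))"
    using assms by (auto simp: fun_eq_iff)
  also have "\<dots> \<in> fvs.span (unit_fun ` S)"
    by (intro fvs.span_sum fvs.span_scale fvs.span_base) auto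
  finally show ?thesis .
qed

lemma Kspace_subset_span: "Kspace m \<subseteq> fvs.span (unit_fun ` {0..<m})"
  by (auto simp: Kspace_def intro!: mem_span_unit_funs)

lemma subspace_Kspace: "fvs.subspace (Kspace m)"
  unfolding fvs.subspace_def Kspace_def by (auto simp: fscale_def)

lemma linear_coord_proj: "Vector_Spaces.linear fscale fscale (coord_proj D)"
  by unfold_locales (auto simp: coord_proj_def fscale_def fun_eq_iff)

lemma independent_span_Int_span_diff:
  assumes B: "fvs.independent B" "finite B" "B0 \<subseteq> B"
    and x: "x \<in> fvs.span B0" "x \<in> fvs.span (B - B0)"
  shows "x = 0"
proof -
  have fin: "finite B0" "finite (B - B0)" using B finite_subset by auto
  obtain c where c: "x = (\<Sum>v\<in>B - B0. fscale (c v) v)" using x fvs.span_finite[OF fin(2)] by auto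
  obtain d where d: "x = (\<Sum>v\<in>B0. fscale (d v) v)" using x fvs.span_finite[OF fin(1)] by auto
  define h where "h v = (if v \<in> B0 then - d v else c v)" for v
  have "(\<Sum>v\<in>B. fscale (h v) v) = (\<Sum>v\<in>B - B0. fscale (h v) v) + (\<Sum>v\<in>B0. fscale (h v) v)"
    by (rule sum.subset_diff[OF B(3) B(2)])
  also have "(\<Sum>v\<in>B - B0. fscale (h v) v) = x"
    unfolding c h_def by (rule sum.cong) auto
  also have "(\<Sum>v\<in>B0. fscale (h v) v) = - x"
    unfolding d h_def by (simp add: sum_negf[symmetric] fscale_def fun_eq_iff sum_fun_apply)
  finally have "(\<Sum>v\<in>B. fscale (h v) v) = 0" by (simp add: fun_eq_iff)
  then have "h v = 0" if "v \<in> B - B0" for v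
    using fvs.independentD[OF B(1,2) order_refl] that by blast
  then have "\<forall>v\<in>B - B0. c v = 0" by (simp add: h_def)
  then show ?thesis
    using c by (simp add: fscale_def fun_eq_iff sum_fun_apply)
qed

lemma card_independent_diff_le:
  assumes f: "Vector_Spaces.linear fscale fscale f" "range f \<subseteq> fvs.span W" "finite W"
    and B: "fvs.independent B" "finite B" "B0 \<subseteq> B"
    and ker: "\<And>v. v \<in> fvs.span B \<Longrightarrow> f v = 0 \<Longrightarrow> v \<in> fvs.span B0"
  shows "card (B - B0) \<le> card W"
proof -
  interpret f: Vector_Spaces.linear fscale fscale f by (rule f(1))
  have sub: "fvs.span (B - B0) \<subseteq> fvs.span B" by (rule fvs.span_mono) (rule Diff_subset)
  have inj: "inj_on f (fvs.span (B - B0))"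
  proof (rule inj_onI)
    fix x y assume xy: "x \<in> fvs.span (B - B0)" "y \<in> fvs.span (B - B0)" "f x = f y"
    then have diff: "x - y \<in> fvs.span (B - B0)" by (simp add: fvs.span_diff)
    have "x - y \<in> fvs.span B0"
      by (rule ker[OF subsetD[OF sub diff]]) (simp add: f.diff xy(3))
    from independent_span_Int_span_diff[OF B this diff] show "x = y" by simp
  qed
  have indep: "fvs.independent (f ` (B - B0))"
    using fvs.independent_mono[OF B(1) Diff_subset] inj by (rule f.independent_injective_image)
  have img: "f ` (B - B0) \<subseteq> fvs.span W"
    by (rule order_trans[OF image_mono[OF subset_UNIV] f(2)])
  have "card (f ` (B - B0)) \<le> card W"
    using fvs.independent_span_bound[OF f(3) indep img] by (rule conjunct2)
  moreover have "card (f ` (B - B0)) = card (B - B0)"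
    by (rule card_image[OF inj_on_subset[OF inj fvs.span_superset]])
  ultimately show ?thesis by simp
qed

lemma basis_mostly_vanishing_on_initial_coords:
  assumes U: "fvs.subspace U" "U \<subseteq> Kspace m"
  obtains B0 B where "B0 \<subseteq> B" "B \<subseteq> U" "fvs.independent B" "U \<subseteq> fvs.span B" "finite B"
    "card B = fvs.dim U" "\<forall>v\<in>B0. \<forall>a<r. v a = 0" "card (B - B0) \<le> r"
proof -
  define W0 where "W0 = {v \<in> U. coord_proj {..<r} v = 0}"
  obtain B0 where B0: "B0 \<subseteq> W0" "fvs.independent B0" "W0 \<subseteq> fvs.span B0"
    by (rule fvs.basis_exists)
  have "B0 \<subseteq> U" using B0(1) by (auto simp: W0_def)
  then obtain B where B: "B0 \<subseteq> B" "B \<subseteq> U" "fvs.independent B" "U \<subseteq> fvs.span B"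
    using B0(2) by (rule fvs.maximal_independent_subset_extend)
  have "B \<subseteq> fvs.span (unit_fun ` {0..<m})" using B(2) U(2) Kspace_subset_span by blast
  then have finB: "finite B" using fvs.independent_span_bound[OF _ B(3)] by blast
  have "\<forall>v\<in>B0. \<forall>a<r. v a = 0"
  proof (intro ballI allI impI)
    fix v a assume "v \<in> B0" "a < r"
    then have "coord_proj {..<r} v a = 0" using B0(1) by (auto simp: W0_def)
    then show "v a = 0" using \<open>a < r\<close> by (simp add: coord_proj_def)
  qed
  moreover have "card (B - B0) \<le> card (unit_fun ` {..<r} :: (nat \<Rightarrow> 'a) set)"
  proof (rule card_independent_diff_le[OF linear_coord_proj _ _ B(3) finB B(1)])
    show "range (coord_proj {..<r}) \<subseteq> fvs.span (unit_fun ` {..<r})"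
      by (auto simp: coord_proj_def split: if_splits intro!: mem_span_unit_funs)
    fix v assume "v \<in> fvs.span B" "coord_proj {..<r} v = 0"
    moreover have "fvs.span B \<subseteq> U" using B(2) U(1) by (rule fvs.span_minimal)
    ultimately show "v \<in> fvs.span B0" using B0(3) by (auto simp: W0_def)
  qed simp
  moreover have "card (unit_fun ` {..<r} :: (nat \<Rightarrow> 'a) set) \<le> r"
    using card_image_le[of "{..<r}" unit_fun] by simp
  moreover have "card B = fvs.dim U" using fvs.basis_card_eq_dim[OF B(2,4,3)] .
  ultimately show ?thesis using that B finB by simp
qed

lemma choose_le_Suc: "x \<le> Suc y \<Longrightarrow> x choose y \<le> Suc y"
  by (cases "x = Suc y"; cases "x = y") (auto simp: binomial_eq_0)

lemma card_subsets_with_large_intersection_le: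
  assumes B: "finite B" "B0 \<subseteq> B" "card (B - B0) \<le> r" "card B \<le> t + 1" "r \<le> t"
  shows "card {T. T \<subseteq> B \<and> card T = t \<and> r \<le> card (T \<inter> (B - B0))} \<le> t + 1 - r"
    (is "card ?T \<le> _")
proof (cases "?T = {}")
  case False
  then obtain T0 where "T0 \<in> ?T" by blast
  then have "r \<le> card (T0 \<inter> (B - B0))" by auto
  also have "\<dots> \<le> card (B - B0)" using B by (intro card_mono) auto
  finally have B1: "card (B - B0) = r" using B by simp
  have T1: "B - B0 \<subseteq> T" if "T \<in> ?T" for T
  proof -
    have "T \<inter> (B - B0) = B - B0"
      using that B1 B(1) card_mono[of "B - B0" "T \<inter> (B - B0)"] by (intro card_subset_eq) auto
    then show ?thesis by blast
  qed
  \<comment> \<open>such a T is determined by its remaining t - r elements, all taken from B0\<close>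
  have inj: "inj_on (\<lambda>T. T \<inter> B0) ?T"
  proof (rule inj_onI)
    fix T T' assume "T \<in> ?T" "T' \<in> ?T" "T \<inter> B0 = T' \<inter> B0"
    then show "T = T'" using T1[of T] T1[of T'] by blast
  qed
  have im: "(\<lambda>T. T \<inter> B0) ` ?T \<subseteq> {S. S \<subseteq> B0 \<and> card S = t - r}"
  proof (rule image_subsetI)
    fix T assume T: "T \<in> ?T"
    then have "T = (B - B0) \<union> (T \<inter> B0)" using T1 by auto
    moreover have "card ((B - B0) \<union> (T \<inter> B0)) = card (B - B0) + card (T \<inter> B0)"
      using B(1) T by (intro card_Un_disjoint) (auto intro: finite_subset)
    ultimately have "card T = card (B - B0) + card (T \<inter> B0)" by simp
    then show "T \<inter> B0 \<in> {S. S \<subseteq> B0 \<and> card S = t - r}" using T B1 by auto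
  qed
  have "card ?T = card ((\<lambda>T. T \<inter> B0) ` ?T)" using card_image[OF inj] by simp
  also have "\<dots> \<le> card {S. S \<subseteq> B0 \<and> card S = t - r}"
    by (rule card_mono[OF finite_subset[of _ "Pow B0"] im]) (use B in \<open>auto intro: finite_subset\<close>)
  also have "\<dots> = card B0 choose (t - r)"
    using B by (intro n_subsets) (auto intro: finite_subset)
  also have "\<dots> \<le> Suc (t - r)"
    using B B1 card_Diff_subset[of B0 B] finite_subset[of B0 B] card_mono[of B B0]
    by (intro choose_le_Suc) auto
  finally show ?thesis using B by simp
qed (metis card.empty le0)

lemma sorted_list_of_set_nth_initial:
  assumes "finite I" "{0..<r} \<subseteq> I" "a < r"
  shows "sorted_list_of_set I ! a = a"
proof -
  have "card I = r + card (I - {0..<r})"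
    using assms card_Diff_subset[of "{0..<r}" I] card_mono[OF assms(1,2)] by simp
  then have "sorted_list_of_set I = [0..<r] @ sorted_list_of_set (I - {0..<r})"
    using assms by (intro sorted_list_of_set_unique[THEN iffD1])
      (auto simp: sorted_wrt_append strict_sorted_list_of_set)
  then show ?thesis using assms by (simp add: nth_append)
qed

lemma coord_proj_wedge_eq_0:
  assumes D: "\<forall>I\<in>D. finite I \<and> {0..<r} \<subseteq> I" and r: "r \<le> t"
    and few: "card {b. b < t \<and> (\<exists>a<r. u b a \<noteq> 0)} < r"
  shows "coord_proj D (wedge t m u) = 0"
proof
  fix I
  show "coord_proj D (wedge t m u) I = 0 I"
  proof (cases "I \<in> D")
    case True
    let ?C = "{b. b < t \<and> (\<exists>a<r. u b a \<noteq> 0)}"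
    have "det (mat t t (\<lambda>(a, b). u b (sorted_list_of_set I ! a))) = 0"
    proof (rule det_eq_0_if_rows_supported_on_fewer_columns[of "{0..<r}" t ?C])
      show "{0..<r} \<subseteq> {0..<t}" "finite ?C" "card ?C < card {0..<r}" using r few by auto
      fix a c assume a: "a \<in> {0..<r}" and c: "c < t" "c \<notin> ?C"
      then have "u c a = 0" by auto
      moreover have "sorted_list_of_set I ! a = a"
        using D True a by (intro sorted_list_of_set_nth_initial) auto
      ultimately show "(case (a, c) of (a, b) \<Rightarrow> u b (sorted_list_of_set I ! a)) = 0" by simp
    qed
    then show ?thesis by (simp add: coord_proj_def wedge_def)
  qed (simp add: coord_proj_def)
qed

definition enum_set :: "nat \<Rightarrow> 'b set \<Rightarrow> nat \<Rightarrow> 'b" where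
  "enum_set t T = (SOME h. bij_betw h {0..<t} T)"

lemma bij_betw_enum_set:
  assumes "finite T" "card T = t"
  shows "bij_betw (enum_set t T) {0..<t} T"
proof -
  obtain h where "bij_betw h {0..<t} T" using ex_bij_betw_nat_finite[OF assms(1)] assms(2) by blast
  then show ?thesis unfolding enum_set_def by (rule someI[where P="\<lambda>h. bij_betw h {0..<t} T"])
qed

lemma coord_proj_wedge_mem_span:
  assumes D: "\<forall>I\<in>D. finite I \<and> {0..<r} \<subseteq> I" and r: "r \<le> t"
    and B0: "\<forall>v\<in>B0. \<forall>a<r. v a = 0" and u: "\<forall>b<t. u b \<in> B"
  shows "coord_proj D (wedge t m u) \<in> fvs.span ((\<lambda>T. coord_proj D (wedge t m (enum_set t T))) `
    {T. T \<subseteq> B \<and> card T = t \<and> r \<le> card (T \<inter> (B - B0))})"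
    (is "_ \<in> fvs.span (?w ` ?T)")
proof (cases "inj_on u {0..<t}")
  case False
  then obtain b1 b2 where "b1 < t" "b2 < t" "b1 \<noteq> b2" "u b1 = u b2"
    unfolding inj_on_def by auto
  then have "wedge t m u = 0" by (rule wedge_eq_0_if_repeated)
  then have "coord_proj D (wedge t m u) = 0" by (simp add: coord_proj_def fun_eq_iff)
  then show ?thesis by (simp add: fvs.span_zero)
next
  case inj: True
  define T where "T = u ` {0..<t}"
  have T: "T \<subseteq> B" "card T = t" "finite T"
    using u card_image[OF inj] by (auto simp: T_def)
  show ?thesis
  proof (cases "T \<in> ?T")
    case True
    have bij: "bij_betw (enum_set t T) {0..<t} T" using T(3,2) by (rule bij_betw_enum_set)
    then have "u ` {0..<t} = enum_set t T ` {0..<t}"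
      unfolding T_def by (simp add: bij_betw_imp_surj_on)
    then obtain c where "wedge t m u = fscale c (wedge t m (enum_set t T))"
      using wedge_eq_scaled_if_same_image[OF inj bij_betw_imp_inj_on[OF bij]] by blast
    then have "coord_proj D (wedge t m u) = fscale c (?w T)"
      by (simp add: coord_proj_def fscale_def fun_eq_iff)
    also have "\<dots> \<in> fvs.span (?w ` ?T)"
      by (rule fvs.span_scale[OF fvs.span_base[OF imageI[OF True]]])
    finally show ?thesis .
  next
    case False
    have "{b. b < t \<and> (\<exists>a<r. u b a \<noteq> 0)} \<subseteq> {b \<in> {0..<t}. u b \<in> B - B0}"
      using u B0 by auto
    then have "card {b. b < t \<and> (\<exists>a<r. u b a \<noteq> 0)} \<le> card {b \<in> {0..<t}. u b \<in> B - B0}"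
      by (rule card_mono[rotated]) simp
    also have "\<dots> = card (T \<inter> (B - B0))"
    proof -
      have "T \<inter> (B - B0) = u ` {b \<in> {0..<t}. u b \<in> B - B0}" by (auto simp: T_def)
      moreover have "inj_on u {b \<in> {0..<t}. u b \<in> B - B0}" using inj by (rule inj_on_subset) auto
      ultimately show ?thesis by (simp add: card_image)
    qed
    also have "\<dots> < r" using False T by auto
    finally have "card {b. b < t \<and> (\<exists>a<r. u b a \<noteq> 0)} < r" .
    then have "coord_proj D (wedge t m u) = 0" by (rule coord_proj_wedge_eq_0[OF D r])
    then show ?thesis by (simp add: fvs.span_zero)
  qed
qed

lemma dim_coord_proj_ext_pow_le:
  assumes U: "fvs.subspace U" "U \<subseteq> Kspace m" "fvs.dim U \<le> t + 1" and r: "r \<le> t"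
    and D: "\<forall>I\<in>D. finite I \<and> {0..<r} \<subseteq> I"
  shows "fvs.dim (coord_proj D ` ext_pow t m U) \<le> t + 1 - r"
proof -
  obtain B0 B where B: "B0 \<subseteq> B" "B \<subseteq> U" "fvs.independent B" "U \<subseteq> fvs.span B" "finite B"
    "card B = fvs.dim U" and B0: "\<forall>v\<in>B0. \<forall>a<r. v a = 0" and B1: "card (B - B0) \<le> r"
    using basis_mostly_vanishing_on_initial_coords[OF U(1,2)] by blast
  define TT where "TT = {T. T \<subseteq> B \<and> card T = t \<and> r \<le> card (T \<inter> (B - B0))}"
  define V where "V = (\<lambda>T. coord_proj D (wedge t m (enum_set t T))) ` TT"
  have finTT: "finite TT"
    using B(5) unfolding TT_def by (rule rev_finite_subset[OF finite_Pow_iff[THEN iffD2]]) auto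
  have "ext_pow t m U \<subseteq> coord_proj D -` fvs.span V"
    unfolding ext_pow_def
  proof (rule fvs.span_minimal)
    interpret proj: Vector_Spaces.linear fscale fscale "coord_proj D" by (rule linear_coord_proj)
    show subspace: "fvs.subspace (coord_proj D -` fvs.span V)"
      by (rule proj.subspace_vimage[OF fvs.subspace_span])
    show "{wedge t m u |u. \<forall>b<t. u b \<in> U} \<subseteq> coord_proj D -` fvs.span V"
    proof clarify
      fix u assume "\<forall>b<t. u b \<in> U"
      then have "\<forall>b<t. u b \<in> fvs.span B" using B(4) by auto
      then show "wedge t m u \<in> coord_proj D -` fvs.span V"
        by (rule wedge_mem_subspace_if_spanned[OF subspace, rotated])
          (simp add: V_def TT_def coord_proj_wedge_mem_span[OF D r B0])
    qed
  qed
  then have "fvs.dim (coord_proj D ` ext_pow t m U) \<le> card V"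
    using finTT unfolding V_def by (intro fvs.dim_le_card) auto
  also have "\<dots> \<le> card TT" unfolding V_def by (rule card_image_le[OF finTT])
  also have "\<dots> \<le> t + 1 - r"
    unfolding TT_def using B U r B1 by (intro card_subsets_with_large_intersection_le) auto
  finally show ?thesis .
qed

section \<open>Rank and small rank of coordinate projections\<close>

definition coord_proj_hom :: "nat set set \<Rightarrow> nat set \<times> nat set \<Rightarrow> 'a::field" where
  "coord_proj_hom D = (\<lambda>(I, J). if I = J \<and> J \<in> D then 1 else 0)"

lemma finite_tsubs: "finite (tsubs m t)"
  unfolding tsubs_def by (rule finite_subset[of _ "Pow {0..<m}"]) auto

lemma tsubsD: "J \<in> tsubs m t \<Longrightarrow> finite J \<and> card J = t"
  unfolding tsubs_def by (auto intro: finite_subset)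

lemma lin_coord_proj_hom:
  assumes "D \<subseteq> tsubs m t"
  shows "lin t m (coord_proj_hom D) = (coord_proj D :: _ \<Rightarrow> _ \<Rightarrow> 'a::field)"
proof (intro ext)
  fix v :: "nat set \<Rightarrow> 'a" and I
  have "lin t m (coord_proj_hom D) v I = (\<Sum>J\<in>tsubs m t. if J = I then coord_proj D v I else 0)"
    unfolding lin_def coord_proj_hom_def coord_proj_def by (rule sum.cong) auto
  also have "\<dots> = coord_proj D v I"
    using assms finite_tsubs[of m t] by (auto simp: coord_proj_def)
  finally show "lin t m (coord_proj_hom D) v I = coord_proj D v I" .
qed

lemma rank_coord_proj_hom:
  assumes "D \<subseteq> tsubs m t"
  shows "rank_hom t m (coord_proj_hom D :: _ \<Rightarrow> 'a::field) = card D"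
proof -
  have fin: "finite D" using assms finite_tsubs finite_subset by blast
  have "fvs.dim (range (coord_proj D :: _ \<Rightarrow> nat set \<Rightarrow> 'a))
      = card (unit_fun ` D :: (nat set \<Rightarrow> 'a) set)"
  proof (rule fvs.dim_unique)
    show "(unit_fun ` D :: (nat set \<Rightarrow> 'a) set) \<subseteq> range (coord_proj D)"
    proof (rule image_subsetI)
      fix T assume "T \<in> D"
      then have "unit_fun T = coord_proj D (unit_fun T)"
        by (auto simp: coord_proj_def unit_fun_def fun_eq_iff)
      then show "unit_fun T \<in> range (coord_proj D)" by (metis rangeI)
    qed
    show "range (coord_proj D) \<subseteq> fvs.span (unit_fun ` D)"
      using fin by (auto simp: coord_proj_def intro!: mem_span_unit_funs)
  qed (use independent_unit_funs[OF fin] in auto)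
  also have "\<dots> = card D" by (rule card_image[OF inj_on_subset[OF inj_unit_fun subset_UNIV]])
  finally show ?thesis unfolding rank_hom_def lin_coord_proj_hom[OF assms] .
qed

lemma wedge_unit_funs:
  assumes T: "T \<in> tsubs m t"
  shows "wedge t m (\<lambda>b. unit_fun (sorted_list_of_set T ! b)) = (unit_fun T :: _ \<Rightarrow> 'a::field)"
proof
  fix J :: "nat set"
  have fT: "finite T" "card T = t" using tsubsD[OF T] by auto
  let ?Ts = "sorted_list_of_set T" and ?Js = "sorted_list_of_set J"
  show "wedge t m (\<lambda>b. unit_fun (?Ts ! b)) J = (unit_fun T :: _ \<Rightarrow> 'a) J"
  proof (cases "J \<in> tsubs m t")
    case False
    then show ?thesis using T by (auto simp: wedge_def unit_fun_def)
  next
    case J: True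
    have fJ: "finite J" "card J = t" using tsubsD[OF J] by auto
    show ?thesis
    proof (cases "J = T")
      case True
      have "mat t t (\<lambda>(a, b). unit_fun (?Ts ! b) (?Ts ! a) :: 'a) = 1\<^sub>m t"
      proof (rule eq_matI)
        fix a b assume "a < dim_row (1\<^sub>m t :: 'a mat)" "b < dim_col (1\<^sub>m t :: 'a mat)"
        moreover from this have "(?Ts ! a = ?Ts ! b) = (a = b)"
          using fT by (simp add: nth_eq_iff_index_eq)
        ultimately show "mat t t (\<lambda>(a, b). unit_fun (?Ts ! b) (?Ts ! a) :: 'a) $$ (a, b) = 1\<^sub>m t $$ (a, b)"
          by (auto simp: unit_fun_def)
      qed auto
      then show ?thesis using True J by (simp add: wedge_def unit_fun_def)
    next
      case False
      have "\<not> J \<subseteq> T" using False fT fJ card_subset_eq by metis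
      then obtain a where a: "a < t" "?Js ! a \<notin> T"
        using fJ by (metis in_set_conv_nth length_sorted_list_of_set set_sorted_list_of_set subsetI)
      have "det (mat t t (\<lambda>(a, b). unit_fun (?Ts ! b) (?Js ! a) :: 'a)) = 0"
      proof (rule det_eq_0_if_zero_row[OF a(1)])
        fix c assume "c < t"
        then have "?Ts ! c \<in> T" using fT by (metis length_sorted_list_of_set nth_mem set_sorted_list_of_set)
        then show "(case (a, c) of (a, b) \<Rightarrow> unit_fun (?Ts ! b) (?Js ! a)) = (0::'a)"
          using a by (auto simp: unit_fun_def)
      qed
      then show ?thesis using False J by (simp add: wedge_def unit_fun_def)
    qed
  qed
qed

lemma small_rank_eqI:
  fixes \<psi> :: "nat set \<times> nat set \<Rightarrow> 'a::field"
  assumes le: "\<And>U. fvs.subspace U \<Longrightarrow> U \<subseteq> Kspace m \<Longrightarrow> fvs.dim U \<le> t + 1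
      \<Longrightarrow> fvs.dim (lin t m \<psi> ` ext_pow t m U) \<le> k"
    and U0: "fvs.subspace U0" "U0 \<subseteq> Kspace m" "fvs.dim U0 \<le> t + 1"
      "k \<le> fvs.dim (lin t m \<psi> ` ext_pow t m U0)"
  shows "small_rank t m \<psi> = k"
  unfolding small_rank_def
proof (rule Max_eqI)
  let ?R = "{fvs.dim (lin t m \<psi> ` ext_pow t m U) | U.
    fvs.subspace U \<and> U \<subseteq> Kspace m \<and> fvs.dim U \<le> t + 1}"
  show "finite ?R" by (rule finite_subset[of _ "{0..k}"]) (use le in auto)
  show "y \<le> k" if "y \<in> ?R" for y using that le by auto
  have "fvs.dim (lin t m \<psi> ` ext_pow t m U0) = k" using le[OF U0(1-3)] U0(4) by simp
  then show "k \<in> ?R" using U0(1-3) by blast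
qed

lemma span_initial_unit_funs:
  assumes "q \<le> m"
  shows "fvs.span (unit_fun ` {0..<q} :: (nat \<Rightarrow> 'a::field) set) \<subseteq> Kspace m"
    and "fvs.dim (fvs.span (unit_fun ` {0..<q} :: (nat \<Rightarrow> 'a) set)) \<le> q"
proof -
  show "fvs.span (unit_fun ` {0..<q} :: (nat \<Rightarrow> 'a) set) \<subseteq> Kspace m"
    by (rule fvs.span_minimal[OF _ subspace_Kspace]) (use assms in \<open>auto simp: Kspace_def unit_fun_def\<close>)
  have "fvs.dim (fvs.span (unit_fun ` {0..<q} :: (nat \<Rightarrow> 'a) set))
      \<le> card (unit_fun ` {0..<q} :: (nat \<Rightarrow> 'a) set)"
    unfolding fvs.dim_span by (rule fvs.dim_le_card') simp
  also have "\<dots> \<le> q" using card_image_le[of "{0..<q}" unit_fun] by simp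
  finally show "fvs.dim (fvs.span (unit_fun ` {0..<q} :: (nat \<Rightarrow> 'a) set)) \<le> q" .
qed

lemma unit_fun_mem_ext_pow:
  assumes T: "T \<in> tsubs m t" and U: "unit_fun ` T \<subseteq> U"
  shows "(unit_fun T :: nat set \<Rightarrow> 'a::field) \<in> ext_pow t m U"
proof -
  have "\<forall>b<t. unit_fun (sorted_list_of_set T ! b) \<in> U"
  proof (intro allI impI)
    fix b assume "b < t"
    then have "sorted_list_of_set T ! b \<in> T"
      using tsubsD[OF T] by (metis length_sorted_list_of_set nth_mem set_sorted_list_of_set)
    then show "unit_fun (sorted_list_of_set T ! b) \<in> U" using U by blast
  qed
  then have "wedge t m (\<lambda>b. unit_fun (sorted_list_of_set T ! b)) \<in> {wedge t m u | u. \<forall>b<t. u b \<in> U}"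
    by blast
  then show ?thesis unfolding ext_pow_def wedge_unit_funs[OF T, symmetric] by (rule fvs.span_base)
qed

lemma card_le_dim_coord_proj_ext_pow:
  assumes D: "D \<subseteq> tsubs m t" and S: "S \<subseteq> D" "\<forall>T\<in>S. T \<subseteq> {0..<q}"
  shows "card S \<le> fvs.dim (coord_proj D ` ext_pow t m (fvs.span (unit_fun ` {0..<q}))
    :: (nat set \<Rightarrow> 'a::field) set)" (is "_ \<le> fvs.dim ?V")
proof -
  have fD: "finite D" using D finite_tsubs finite_subset by blast
  have sub: "unit_fun ` S \<subseteq> ?V"
  proof (rule image_subsetI)
    fix T assume T: "T \<in> S"
    then have "T \<in> tsubs m t" using S(1) D by blast
    moreover have "unit_fun ` T \<subseteq> fvs.span (unit_fun ` {0..<q})"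
      using T S(2) by (intro subset_trans[OF image_mono fvs.span_superset]) blast
    ultimately have "unit_fun T \<in> ext_pow t m (fvs.span (unit_fun ` {0..<q}))"
      by (rule unit_fun_mem_ext_pow)
    moreover have "coord_proj D (unit_fun T) = unit_fun T"
      using T S(1) by (auto simp: coord_proj_def unit_fun_def fun_eq_iff)
    ultimately show "unit_fun T \<in> ?V" by (metis image_eqI)
  qed
  obtain C where C: "C \<subseteq> ?V" "fvs.independent C" "?V \<subseteq> fvs.span C" "card C = fvs.dim ?V"
    by (rule fvs.basis_exists)
  have "?V \<subseteq> fvs.span (unit_fun ` D)"
    using fD by (auto simp: coord_proj_def intro!: mem_span_unit_funs)
  then have "C \<subseteq> fvs.span (unit_fun ` D)" using C(1) by (rule subset_trans[rotated])
  from fvs.independent_span_bound[OF finite_imageI[OF fD] C(2) this] have fC: "finite C" ..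
  have "finite S" using S(1) fD finite_subset by blast
  from fvs.independent_span_bound[OF fC independent_unit_funs[OF this] subset_trans[OF sub C(3)]]
  have "card (unit_fun ` S :: (nat set \<Rightarrow> 'a) set) \<le> card C" ..
  moreover have "card (unit_fun ` S :: (nat set \<Rightarrow> 'a) set) = card S"
    by (rule card_image[OF inj_on_subset[OF inj_unit_fun subset_UNIV]])
  ultimately show ?thesis using C by simp
qed

lemma small_rank_coord_proj_hom:
  assumes r: "r \<le> t" and D: "D \<subseteq> tsubs m t" "\<forall>I\<in>D. {0..<r} \<subseteq> I"
    and q: "q \<le> m" "q \<le> t + 1"
    and S: "S \<subseteq> D" "\<forall>T\<in>S. T \<subseteq> {0..<q}" "card S = t + 1 - r"
  shows "small_rank t m (coord_proj_hom D :: _ \<Rightarrow> 'a::field) = t + 1 - r"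
proof (rule small_rank_eqI)
  have "\<forall>I\<in>D. finite I \<and> {0..<r} \<subseteq> I" using D tsubsD by auto
  then show "fvs.dim (lin t m (coord_proj_hom D :: _ \<Rightarrow> 'a) ` ext_pow t m U) \<le> t + 1 - r"
    if "fvs.subspace U" "U \<subseteq> Kspace m" "fvs.dim U \<le> t + 1" for U
    unfolding lin_coord_proj_hom[OF D(1)] using that r by (intro dim_coord_proj_ext_pow_le)
  show "fvs.subspace (fvs.span (unit_fun ` {0..<q}) :: (nat \<Rightarrow> 'a) set)" by simp
  show "fvs.span (unit_fun ` {0..<q}) \<subseteq> Kspace m"
    using span_initial_unit_funs(1)[OF q(1)] .
  show "fvs.dim (fvs.span (unit_fun ` {0..<q}) :: (nat \<Rightarrow> 'a) set) \<le> t + 1"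
    using le_trans[OF span_initial_unit_funs(2)[OF q(1)] q(2)] .
  show "t + 1 - r \<le> fvs.dim (lin t m (coord_proj_hom D :: _ \<Rightarrow> 'a) `
      ext_pow t m (fvs.span (unit_fun ` {0..<q})))"
    unfolding lin_coord_proj_hom[OF D(1)] S(3)[symmetric] using D(1) S(1,2)
    by (rule card_le_dim_coord_proj_ext_pow)
qed

lemma small_rank_coord_proj_hom_empty: "small_rank t m (coord_proj_hom {} :: _ \<Rightarrow> 'a::field) = 0"
proof (rule small_rank_eqI)
  have "lin t m (coord_proj_hom {} :: _ \<Rightarrow> 'a) = (\<lambda>v. 0)"
    using lin_coord_proj_hom[of "{}" m t] by (auto simp: coord_proj_def fun_eq_iff)
  then show "fvs.dim (lin t m (coord_proj_hom {} :: _ \<Rightarrow> 'a) ` X) \<le> 0" for X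
    using fvs.dim_le_card[of "(\<lambda>v. 0 :: nat set \<Rightarrow> 'a) ` X" "{}"] by auto
  show "fvs.subspace {0 :: nat \<Rightarrow> 'a}" "{0} \<subseteq> Kspace m" "fvs.dim {0 :: nat \<Rightarrow> 'a} \<le> t + 1"
    using fvs.dim_le_card[of "{0 :: nat \<Rightarrow> 'a}" "{}"] by (auto simp: Kspace_def)
qed simp

section \<open>Limits of exterior powers of diagonal maps\<close>

lemma polyfun_along_polynomial_curve:
  fixes \<gamma> :: "'a::comm_ring_1 \<Rightarrow> 'i \<Rightarrow> 'a"
  assumes "p \<in> polyfun" and coords: "\<And>i. \<exists>q. \<forall>s. \<gamma> s i = poly q s"
  shows "\<exists>Q. \<forall>s. p (\<gamma> s) = poly Q s"
  using assms(1)
proof induction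
  case (const c)
  show ?case by (intro exI[of _ "[:c:]"]) simp
next
  case (coord i)
  show ?case using coords[of i] by simp
next
  case (add p q)
  then obtain P Q where "\<forall>s. p (\<gamma> s) = poly P s" "\<forall>s. q (\<gamma> s) = poly Q s" by blast
  then show ?case by (intro exI[of _ "P + Q"]) simp
next
  case (mult p q)
  then obtain P Q where "\<forall>s. p (\<gamma> s) = poly P s" "\<forall>s. q (\<gamma> s) = poly Q s" by blast
  then show ?case by (intro exI[of _ "P * Q"]) simp
qed

lemma mem_zariski_closure_of_polynomial_curve:
  fixes \<gamma> :: "'a::idom \<Rightarrow> 'i \<Rightarrow> 'a"
  assumes inf: "infinite (UNIV :: 'a set)"
    and coords: "\<And>i. \<exists>q. \<forall>s. \<gamma> s i = poly q s"
    and S: "\<And>s. s \<noteq> 0 \<Longrightarrow> \<gamma> s \<in> S" and A: "\<gamma> 0 \<in> A"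
  shows "\<gamma> 0 \<in> zariski_closure A S"
proof -
  have "p (\<gamma> 0) = 0" if p: "p \<in> polyfun" and van: "\<forall>x\<in>S. p x = 0" for p
  proof -
    obtain Q where Q: "\<And>s. p (\<gamma> s) = poly Q s"
      using polyfun_along_polynomial_curve[where \<gamma>=\<gamma>, OF p coords] by blast
    have "Q = 0"
    proof (rule ccontr)
      assume "Q \<noteq> 0"
      then have "finite {s. poly Q s = 0}" by (rule poly_roots_finite)
      moreover have "poly Q s = 0" if "s \<noteq> 0" for s
      proof -
        have "p (\<gamma> s) = 0" using van S[OF that] by blast
        then show ?thesis by (simp only: Q)
      qed
      then have "UNIV \<subseteq> insert 0 {s. poly Q s = 0}" by blast
      ultimately show False using inf by (metis finite_insert finite_subset)
    qed
    then show ?thesis using Q by simp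
  qed
  then show ?thesis using A unfolding zariski_closure_def by blast
qed

lemma minor_diagonal:
  fixes d :: "nat \<Rightarrow> 'a::field"
  assumes I: "I \<in> tsubs n t" and J: "J \<in> tsubs m t"
  shows "minor t (\<lambda>i j. if i = j then d i else 0) I J = (if I = J then \<Prod>j\<in>J. d j else 0)"
proof -
  let ?Is = "sorted_list_of_set I" and ?Js = "sorted_list_of_set J"
  have fI: "finite I" "card I = t" and fJ: "finite J" "card J = t" using tsubsD I J by auto
  show ?thesis
  proof (cases "I = J")
    case True
    let ?A = "mat t t (\<lambda>(a, b). if ?Is ! a = ?Is ! b then d (?Is ! a) else 0)"
    have "upper_triangular ?A"
    proof (rule upper_triangularI)
      fix i j assume ij: "j < i" "i < dim_row ?A"
      then have "?Is ! i \<noteq> ?Is ! j" using fI by (simp add: nth_eq_iff_index_eq)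
      then show "?A $$ (i, j) = 0" using ij by simp
    qed
    then have "det ?A = prod_list (diag_mat ?A)" by (rule det_upper_triangular[of _ t]) simp
    also have "\<dots> = (\<Prod>a\<in>{0..<t}. d (?Is ! a))"
      by (simp add: diag_mat_def prod.distinct_set_conv_list[symmetric])
    also have "\<dots> = (\<Prod>j\<in>I. d j)"
      by (rule prod.reindex_bij_betw) (rule bij_betw_nth, use fI in auto)
    finally show ?thesis unfolding minor_def using True by simp
  next
    case False
    have "\<not> I \<subseteq> J" using False fI fJ card_subset_eq by metis
    then obtain a where a: "a < t" "?Is ! a \<notin> J"
      using fI by (metis in_set_conv_nth length_sorted_list_of_set set_sorted_list_of_set subsetI)
    have "det (mat t t (\<lambda>(a, b). if ?Is ! a = ?Js ! b then d (?Is ! a) else 0)) = 0"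
    proof (rule det_eq_0_if_zero_row[OF a(1)])
      fix c assume "c < t"
      then have "?Js ! c \<in> J" using fJ by (metis length_sorted_list_of_set nth_mem set_sorted_list_of_set)
      then show "(case (a, c) of (a, b) \<Rightarrow> if ?Is ! a = ?Js ! b then d (?Is ! a) else 0) = 0"
        using a by auto
    qed
    then show ?thesis unfolding minor_def using False by simp
  qed
qed

lemma Lambda_diagonal:
  assumes "m \<le> n"
  shows "Lambda t m n (\<lambda>i j. if i = j then d i else 0)
    = (\<lambda>(I, J). if I = J \<and> J \<in> tsubs m t then \<Prod>j\<in>J. d j else (0::'a::field))"
proof (intro ext, clarify)
  fix I J
  have sub: "tsubs m t \<subseteq> tsubs n t" using assms by (auto simp: tsubs_def)
  show "Lambda t m n (\<lambda>i j. if i = j then d i else 0) (I, J)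
      = (if I = J \<and> J \<in> tsubs m t then \<Prod>j\<in>J. d j else 0)"
  proof (cases "I \<in> tsubs n t \<and> J \<in> tsubs m t")
    case True
    then show ?thesis using minor_diagonal[of I n t J m d] by (simp add: Lambda_def)
  next
    case False
    then show ?thesis using sub by (auto simp: Lambda_def)
  qed
qed

lemma prod_two_weights:
  assumes "finite J"
  shows "(\<Prod>j\<in>J. if j < r then \<mu> else \<mu> * s) = \<mu> ^ card J * s ^ card (J - {..<r})"
proof -
  have "(\<Prod>j\<in>J. if j < r then \<mu> else \<mu> * s) = \<mu> ^ card (J \<inter> {..<r}) * (\<mu> * s) ^ card (J - {..<r})"
    using prod.If_cases[OF assms, of "\<lambda>j. j < r" "\<lambda>_. \<mu>" "\<lambda>_. \<mu> * s"]
    by (simp add: Int_def set_diff_eq lessThan_def)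
  moreover have "card J = card (J \<inter> {..<r}) + card (J - {..<r})"
    using assms by (metis card_Int_Diff)
  ultimately show ?thesis by (simp add: power_add power_mult_distrib mult.assoc)
qed

definition tsubs_between :: "nat \<Rightarrow> nat \<Rightarrow> nat \<Rightarrow> nat \<Rightarrow> nat set set" where
  "tsubs_between m t r l = {J \<in> tsubs m t. {0..<r} \<subseteq> J \<and> J \<subseteq> {0..<r + l}}"

text \<open>These are the t-th exterior powers of diag(\<mu>, ..., \<mu>, \<mu>s, ..., \<mu>s, 0, ...), with r entries \<mu>
  and l entries \<mu>s, where \<mu>^t = s^(r - t).\<close>
lemma weighted_coord_proj_mem_range_Lambda:
  fixes s :: "'a::alg_closed_field"
  assumes s: "s \<noteq> 0" and t: "0 < t" "r \<le> t" and "m \<le> n"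
  shows "(\<lambda>(I, J). if I = J \<and> J \<in> tsubs m t \<and> J \<subseteq> {0..<r + l} then s ^ card ({0..<r} - J) else 0)
    \<in> range (Lambda t m n)"
proof -
  obtain \<mu> :: 'a where \<mu>: "\<mu> ^ t = inverse s ^ (t - r)" using nth_root_exists t by blast
  define d where "d i = (if i < r + l then if i < r then \<mu> else \<mu> * s else 0)" for i
  have inside: "(\<Prod>j\<in>J. d j) = s ^ card ({0..<r} - J)"
    if J: "J \<in> tsubs m t" "J \<subseteq> {0..<r + l}" for J
  proof -
    have fJ: "finite J" "card J = t" using tsubsD[OF J(1)] by auto
    have "card (J \<inter> {..<r}) + card (J - {..<r}) = t"
      using fJ card_Int_Diff[of J "{..<r}"] by simp
    moreover have "card (J \<inter> {..<r}) + card ({0..<r} - J) = r"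
      using card_Int_Diff[of "{0..<r}" J] by (simp add: Int_commute lessThan_atLeast0)
    ultimately have card: "card (J - {..<r}) = (t - r) + card ({0..<r} - J)" using t by linarith
    have "(\<Prod>j\<in>J. d j) = (\<Prod>j\<in>J. if j < r then \<mu> else \<mu> * s)"
      using J(2) by (intro prod.cong) (auto simp: d_def)
    also have "\<dots> = inverse s ^ (t - r) * s ^ (t - r) * s ^ card ({0..<r} - J)"
      unfolding prod_two_weights[OF fJ(1)] fJ(2) \<mu> card by (simp add: power_add mult.assoc)
    also have "\<dots> = s ^ card ({0..<r} - J)" using s by (simp add: power_mult_distrib[symmetric])
    finally show ?thesis .
  qed
  have outside: "(\<Prod>j\<in>J. d j) = 0" if J: "\<not> J \<subseteq> {0..<r + l}" "finite J" for J
  proof -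
    obtain j where "j \<in> J" "\<not> j < r + l" using J(1) by (auto simp: subset_iff)
    then show ?thesis using J(2) by (intro prod_zero bexI[of _ j]) (auto simp: d_def)
  qed
  have "Lambda t m n (\<lambda>i j. if i = j then d i else 0)
      = (\<lambda>(I, J). if I = J \<and> J \<in> tsubs m t \<and> J \<subseteq> {0..<r + l} then s ^ card ({0..<r} - J) else 0)"
    unfolding Lambda_diagonal[OF \<open>m \<le> n\<close>]
  proof (intro ext, clarify)
    fix I J
    show "(if I = J \<and> J \<in> tsubs m t then \<Prod>j\<in>J. d j else 0)
        = (if I = J \<and> J \<in> tsubs m t \<and> J \<subseteq> {0..<r + l} then s ^ card ({0..<r} - J) else 0)"
      using tsubsD[of J m t] inside[of J] outside[of J] by auto
  qed
  then show ?thesis by (metis rangeI)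
qed

lemma coord_proj_hom_tsubs_between_mem_Xt:
  assumes t: "0 < t" "r \<le> t" and "m \<le> n"
  shows "coord_proj_hom (tsubs_between m t r l)
    \<in> (Xt t m n :: (_ \<Rightarrow> 'a::{alg_closed_field, field_char_0}) set)"
proof -
  define \<gamma> :: "'a \<Rightarrow> nat set \<times> nat set \<Rightarrow> 'a" where
    "\<gamma> s = (\<lambda>(I, J). if I = J \<and> J \<in> tsubs m t \<and> J \<subseteq> {0..<r + l}
      then s ^ card ({0..<r} - J) else 0)" for s
  have coords: "\<exists>q. \<forall>s. \<gamma> s i = poly q s" for i
  proof (cases i)
    case (Pair I J)
    show ?thesis
      by (rule exI[of _ "monom (if I = J \<and> J \<in> tsubs m t \<and> J \<subseteq> {0..<r + l} then 1 else 0)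
          (card ({0..<r} - J))"])
        (auto simp: Pair \<gamma>_def poly_monom)
  qed
  have "\<gamma> s \<in> range (Lambda t m n)" if "s \<noteq> 0" for s
    unfolding \<gamma>_def using that assms by (rule weighted_coord_proj_mem_range_Lambda)
  moreover have "\<gamma> 0 \<in> HomSpace t m n"
    using assms by (auto simp: \<gamma>_def HomSpace_def tsubs_def)
  ultimately have "\<gamma> 0 \<in> Xt t m n"
    unfolding Xt_def by (rule mem_zariski_closure_of_polynomial_curve[OF infinite_UNIV_char_0 coords])
  moreover have "(0::'a) ^ card ({0..<r} - J) = (if {0..<r} \<subseteq> J then 1 else 0)" for J
    by (simp add: power_0_left card_eq_0_iff)
  then have "\<gamma> 0 = coord_proj_hom (tsubs_between m t r l)"
    by (auto simp: \<gamma>_def coord_proj_hom_def tsubs_between_def fun_eq_iff)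
  ultimately show ?thesis by simp
qed

lemma card_tsubs_between:
  assumes "r \<le> t" "r + l \<le> m"
  shows "card (tsubs_between m t r l) = l choose (t - r)"
proof -
  let ?S = "{S. S \<subseteq> {r..<r + l} \<and> card S = t - r}"
  have "tsubs_between m t r l = (\<lambda>S. {0..<r} \<union> S) ` ?S"
  proof (intro equalityI subsetI)
    fix J assume J: "J \<in> tsubs_between m t r l"
    then have "card J = t" by (auto simp: tsubs_between_def dest: tsubsD)
    with J have "J - {0..<r} \<in> ?S" "J = {0..<r} \<union> (J - {0..<r})"
      by (auto simp: tsubs_between_def card_Diff_subset)
    then show "J \<in> (\<lambda>S. {0..<r} \<union> S) ` ?S" by blast
  next
    fix J assume "J \<in> (\<lambda>S. {0..<r} \<union> S) ` ?S"
    then obtain S where S: "S \<subseteq> {r..<r + l}" "card S = t - r" and J: "J = {0..<r} \<union> S" by blast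
    have "card J = card {0..<r} + card S"
      unfolding J using S by (intro card_Un_disjoint) (auto intro: finite_subset)
    then show "J \<in> tsubs_between m t r l"
      using S J assms by (auto simp: tsubs_between_def tsubs_def)
  qed
  moreover have "inj_on (\<lambda>S. {0..<r} \<union> S) ?S"
  proof (rule inj_on_inverseI)
    show "({0..<r} \<union> S) - {0..<r} = S" if "S \<in> ?S" for S using that by auto
  qed
  ultimately have "card (tsubs_between m t r l) = card ?S" by (simp add: card_image)
  also have "\<dots> = l choose (t - r)" by (subst n_subsets) simp_all
  finally show ?thesis .
qed

lemma small_rank_coord_proj_hom_tsubs_between:
  assumes r: "r \<le> t" "t + 1 \<le> r + l" "r + l \<le> m"
  shows "small_rank t m (coord_proj_hom (tsubs_between m t r l) :: _ \<Rightarrow> 'a::field) = t + 1 - r"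
proof (rule small_rank_coord_proj_hom[where q = "t + 1" and S = "(\<lambda>j. {0..<t + 1} - {j}) ` {r..t}"])
  show "(\<lambda>j. {0..<t + 1} - {j}) ` {r..t} \<subseteq> tsubs_between m t r l"
  proof (rule image_subsetI)
    fix j assume j: "j \<in> {r..t}"
    then have "card ({0..<t + 1} - {j}) = t" by simp
    moreover have "{0..<t + 1} - {j} \<subseteq> {0..<m}" "{0..<r} \<subseteq> {0..<t + 1} - {j}"
      "{0..<t + 1} - {j} \<subseteq> {0..<r + l}"
      using j r by auto
    ultimately show "{0..<t + 1} - {j} \<in> tsubs_between m t r l"
      by (simp add: tsubs_between_def tsubs_def)
  qed
  have "inj_on (\<lambda>j. {0..<t + 1} - {j}) {r..t}"
  proof (rule inj_on_inverseI)
    show "the_elem ({0..<t + 1} - ({0..<t + 1} - {j})) = j" if "j \<in> {r..t}" for j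
      using that by (simp add: Diff_Diff_Int)
  qed
  then show "card ((\<lambda>j. {0..<t + 1} - {j}) ` {r..t}) = t + 1 - r"
    by (simp add: card_image)
qed (use r in \<open>auto simp: tsubs_between_def\<close>)

lemma small_rank_coord_proj_hom_singleton:
  assumes "t \<le> m"
  shows "small_rank t m (coord_proj_hom {{0..<t}} :: _ \<Rightarrow> 'a::field) = 1"
  using small_rank_coord_proj_hom[of t t "{{0..<t}}" m t "{{0..<t}}"] assms
  by (simp add: tsubs_def)

theorem proposition2p2:
  fixes t m n :: nat
  assumes "1 \<le> t" "t \<le> m" "m \<le> n"
  shows "(\<exists>x::nat set \<times> nat set \<Rightarrow> 'a::{alg_closed_field, field_char_0}.
            x \<in> Xt t m n \<and> small_rank t m x = 0 \<and> rank_hom t m x = 0)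
       \<and> (\<exists>x::nat set \<times> nat set \<Rightarrow> 'a.
            x \<in> Xt t m n \<and> small_rank t m x = 1 \<and> rank_hom t m x = 1)
       \<and> (\<forall>u\<in>{2..t+1}. \<forall>k\<in>{1..m-t}. \<exists>x::nat set \<times> nat set \<Rightarrow> 'a.
            x \<in> Xt t m n \<and> small_rank t m x = u \<and> rank_hom t m x = (u + k - 1) choose (u - 1))"
proof (intro conjI ballI)
  have "tsubs_between m t 0 0 = {}" using assms by (auto simp: tsubs_between_def tsubs_def)
  then have "coord_proj_hom {} \<in> (Xt t m n :: (_ \<Rightarrow> 'a) set)"
    using coord_proj_hom_tsubs_between_mem_Xt[of t 0 m n 0] assms by simp
  then show "\<exists>x::_ \<Rightarrow> 'a. x \<in> Xt t m n \<and> small_rank t m x = 0 \<and> rank_hom t m x = 0"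
    using small_rank_coord_proj_hom_empty rank_coord_proj_hom[of "{}" m t] by auto
next
  have "tsubs_between m t t 0 = {{0..<t}}"
    using assms by (auto simp: tsubs_between_def tsubs_def card_subset_eq)
  then have "coord_proj_hom {{0..<t}} \<in> (Xt t m n :: (_ \<Rightarrow> 'a) set)"
    using coord_proj_hom_tsubs_between_mem_Xt[of t t m n 0] assms by simp
  then show "\<exists>x::_ \<Rightarrow> 'a. x \<in> Xt t m n \<and> small_rank t m x = 1 \<and> rank_hom t m x = 1"
    using small_rank_coord_proj_hom_singleton[OF assms(2)] rank_coord_proj_hom[of "{{0..<t}}" m t]
      assms by (auto simp: tsubs_def)
next
  fix u k assume u: "u \<in> {2..t + 1}" and k: "k \<in> {1..m - t}"
  define r l where "r = t + 1 - u" and "l = u - 1 + k"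
  have rl: "r \<le> t" "t + 1 \<le> r + l" "r + l \<le> m" "t + 1 - r = u"
    "l choose (t - r) = (u + k - 1) choose (u - 1)"
    using u k assms by (auto simp: r_def l_def)
  show "\<exists>x::_ \<Rightarrow> 'a. x \<in> Xt t m n \<and> small_rank t m x = u
      \<and> rank_hom t m x = (u + k - 1) choose (u - 1)"
    using coord_proj_hom_tsubs_between_mem_Xt[of t r m n l]
      small_rank_coord_proj_hom_tsubs_between[OF rl(1-3)]
      rank_coord_proj_hom[of "tsubs_between m t r l" m t] card_tsubs_between[OF rl(1)] rl assms
    by (auto simp: tsubs_between_def)
qed

end
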